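(* Let $x_0<\dots<x_n$ and $\hat x_0<\dots<\hat x_n$ be real numbers with $\hat x_0=x_0$ and $\hat x_n=x_n$, let $\mathbf{y}\in\mathbb{R}^{n+1}$, and let $z_k=z_k(\mathbf{x},\hat{\mathbf{x}})$. Then \[ \|\mathbf{y}\mathbf{z}\|_\infty\ \le\ \sup_{x_0\le t\le x_n}\bigl|p(t;\hat{\mathbf{x}},\mathbf{y},\lambda(\mathbf{x}))-P_{\mathbf{y}}(t)\bigr|\ \le\ \Lambda(\hat{\mathbf{x}})\,\|\mathbf{y}\mathbf{z}\|_\infty, \] where $(\mathbf{y}\mathbf{z})_k=y_kz_k$. Moreover $p(t;\hat{\mathbf{x}},\mathbf{y},\lambda(\mathbf{x}))=P_{\mathbf{y}+\mathbf{y}\mathbf{z}}(t)$ for all $t$.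
   Context: $\lambda_k(\mathbf{x}):=1/\prod_{j\neq k}(x_k-x_j)$ and $\lambda(\mathbf x)=(\lambda_0(\mathbf x),\dots,\lambda_n(\mathbf x))$; $z_k(\mathbf{x},\hat{\mathbf{x}}):=(\lambda_k(\mathbf{x})-\lambda_k(\hat{\mathbf{x}}))/\lambda_k(\hat{\mathbf{x}})$. The first barycentric formula is the polynomial $p(t;\mathbf{u},\mathbf{y},\mathbf{w}):=\bigl(\prod_{k=0}^n(t-u_k)\bigr)\sum_{k=0}^n\frac{w_ky_k}{t-u_k}$ (extended by continuity at the nodes). For $\mathbf{v}\in\mathbb{R}^{n+1}$, $P_{\mathbf{v}}$ denotes the unique polynomial of degree at most $n$ with $P_{\mathbf{v}}(\hat x_k)=v_k$ for all $k$. $\Lambda(\hat{\mathbf{x}}):=\max_{t\in[x_0,x_n]}\sum_{j}|\ell_j(t)|$ with $\ell_j$ the Lagrange polynomials for the nodes $\hat{\mathbf{x}}$. *)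

theory Defs
  imports "HOL-Analysis.Analysis" "HOL-Computational_Algebra.Polynomial"
begin

text \<open>Nodes are functions nat => real, used on the index set {0..n}.\<close>

definition bary_lambda :: "nat \<Rightarrow> (nat \<Rightarrow> real) \<Rightarrow> nat \<Rightarrow> real" where
  "bary_lambda n x k = 1 / (\<Prod>j\<in>{0..n} - {k}. (x k - x j))"

definition bary_z :: "nat \<Rightarrow> (nat \<Rightarrow> real) \<Rightarrow> (nat \<Rightarrow> real) \<Rightarrow> nat \<Rightarrow> real" where
  "bary_z n x xh k = (bary_lambda n x k - bary_lambda n xh k) / bary_lambda n xh k"

text \<open>First barycentric formula, written as the polynomial it is
  (i.e. already extended by continuity at the nodes).\<close>
definition bary_p :: "nat \<Rightarrow> real \<Rightarrow> (nat \<Rightarrow> real) \<Rightarrow> (nat \<Rightarrow> real) \<Rightarrow> (nat \<Rightarrow> real) \<Rightarrow> real" where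
  "bary_p n t u y w = (\<Sum>k\<in>{0..n}. w k * y k * (\<Prod>j\<in>{0..n} - {k}. (t - u j)))"

definition interp_poly :: "nat \<Rightarrow> (nat \<Rightarrow> real) \<Rightarrow> (nat \<Rightarrow> real) \<Rightarrow> real poly" where
  "interp_poly n xh v = (THE P. degree P \<le> n \<and> (\<forall>k\<in>{0..n}. poly P (xh k) = v k))"

definition lagrange_basis :: "nat \<Rightarrow> (nat \<Rightarrow> real) \<Rightarrow> nat \<Rightarrow> real \<Rightarrow> real" where
  "lagrange_basis n xh j t = (\<Prod>i\<in>{0..n} - {j}. (t - xh i) / (xh j - xh i))"

definition lebesgue_const :: "nat \<Rightarrow> (nat \<Rightarrow> real) \<Rightarrow> real" where
  "lebesgue_const n xh =
     (SUP t\<in>{xh 0..xh n}. (\<Sum>j\<in>{0..n}. \<bar>lagrange_basis n xh j t\<bar>))"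

definition sup_norm :: "nat \<Rightarrow> (nat \<Rightarrow> real) \<Rightarrow> real" where
  "sup_norm n v = Max ((\<lambda>k. \<bar>v k\<bar>) ` {0..n})"

end

theory Submission
  imports Defs
begin

text \<open>The weight vectors enter only through the ratios \<open>\<lambda>\<^sub>k(x) / \<lambda>\<^sub>k(xh) = 1 + z\<^sub>k\<close>,
  so the first barycentric formula with nodes \<open>xh\<close> and weights \<open>\<lambda>(x)\<close> is the
  Lagrange interpolant at \<open>xh\<close> of the data \<open>y + yz\<close>. Its deviation from \<open>P\<^sub>y\<close> is
  therefore the interpolant \<open>P\<^sub>y\<^sub>z\<close>, whose sup norm on \<open>[x\<^sub>0, x\<^sub>n] = [xh\<^sub>0, xh\<^sub>n]\<close> is at
  least its largest node value \<open>\<parallel>yz\<parallel>\<^sub>\<infinity>\<close> and at most \<open>\<Lambda>(xh) \<parallel>yz\<parallel>\<^sub>\<infinity>\<close>.\<close>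

definition lagrange_interp :: "nat \<Rightarrow> (nat \<Rightarrow> real) \<Rightarrow> (nat \<Rightarrow> real) \<Rightarrow> real poly" where
  "lagrange_interp n xh v = (\<Sum>k\<in>{0..n}. smult (v k / (\<Prod>i\<in>{0..n} - {k}. (xh k - xh i)))
                                 (\<Prod>i\<in>{0..n} - {k}. [:- xh i, 1:]))"

lemma poly_lagrange_interp:
  "poly (lagrange_interp n xh v) t = (\<Sum>k\<in>{0..n}. v k * lagrange_basis n xh k t)"
  unfolding lagrange_interp_def lagrange_basis_def
  by (simp add: poly_sum poly_prod prod_dividef)

lemma degree_lagrange_interp: "degree (lagrange_interp n xh v) \<le> n"
  unfolding lagrange_interp_def
proof (rule degree_sum_le)
  fix k assume "k \<in> {0..n}"
  have "degree (\<Prod>i\<in>{0..n} - {k}. [:- xh i, 1:]) \<le> (\<Sum>i\<in>{0..n} - {k}. degree [:- xh i, 1:])"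
    using degree_prod_sum_le[of "{0..n} - {k}" "\<lambda>i. [:- xh i, 1:]"] by (simp add: o_def)
  also have "\<dots> \<le> n" using \<open>k \<in> {0..n}\<close> by simp
  finally show "degree (smult (v k / (\<Prod>i\<in>{0..n} - {k}. (xh k - xh i)))
                       (\<Prod>i\<in>{0..n} - {k}. [:- xh i, 1:])) \<le> n"
    by (meson degree_smult_le order_trans)
qed simp

lemma node_product_nonzero:
  fixes xh :: "nat \<Rightarrow> real"
  assumes "inj_on xh {0..n}" "k \<le> n"
  shows "(\<Prod>j\<in>{0..n} - {k}. (xh k - xh j)) \<noteq> 0"
proof -
  have "xh k \<noteq> xh j" if "j \<in> {0..n} - {k}" for j
    using assms that by (auto dest: inj_onD)
  then show ?thesis by simp
qed

lemma lagrange_basis_node: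
  assumes inj: "inj_on xh {0..n}" and "k \<le> n" "m \<le> n"
  shows "lagrange_basis n xh k (xh m) = (if k = m then 1 else 0)"
proof (cases "k = m")
  case True
  then show ?thesis
    using node_product_nonzero[OF assms(1,2)] by (simp add: lagrange_basis_def prod_dividef)
next
  case False
  then have "m \<in> {0..n} - {k}" using assms by auto
  then have "(\<Prod>i\<in>{0..n} - {k}. (xh m - xh i) / (xh k - xh i)) = 0"
    by (intro prod_zero) auto
  then show ?thesis using False by (simp add: lagrange_basis_def)
qed

lemma poly_lagrange_interp_node:
  assumes "inj_on xh {0..n}" "m \<le> n"
  shows "poly (lagrange_interp n xh v) (xh m) = v m"
proof -
  have "poly (lagrange_interp n xh v) (xh m) = (\<Sum>k\<in>{0..n}. if k = m then v k else 0)"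
    unfolding poly_lagrange_interp
    by (intro sum.cong) (use lagrange_basis_node[OF assms(1)] assms(2) in auto)
  also have "\<dots> = v m" using assms by simp
  finally show ?thesis .
qed

lemma interp_poly_eq_lagrange_interp:
  assumes inj: "inj_on xh {0..n}"
  shows "interp_poly n xh v = lagrange_interp n xh v"
  unfolding interp_poly_def
proof (rule the_equality)
  show "degree (lagrange_interp n xh v) \<le> n
        \<and> (\<forall>k\<in>{0..n}. poly (lagrange_interp n xh v) (xh k) = v k)"
    using degree_lagrange_interp poly_lagrange_interp_node[OF inj] by auto
next
  fix P assume P: "degree P \<le> n \<and> (\<forall>k\<in>{0..n}. poly P (xh k) = v k)"
  have "card (xh ` {0..n}) = Suc n" using card_image[OF inj] by simp
  then show "P = lagrange_interp n xh v"
    by (intro poly_eqI_degree[where A="xh ` {0..n}"])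
       (use P degree_lagrange_interp[of n xh v] poly_lagrange_interp_node[OF inj] in auto)
qed

lemma poly_interp_poly:
  assumes "inj_on xh {0..n}"
  shows "poly (interp_poly n xh v) t = (\<Sum>k\<in>{0..n}. v k * lagrange_basis n xh k t)"
  by (simp add: interp_poly_eq_lagrange_interp[OF assms] poly_lagrange_interp)

lemma interp_poly_cong:
  assumes "\<And>k. k \<le> n \<Longrightarrow> v k = w k"
  shows "interp_poly n xh v = interp_poly n xh w"
  unfolding interp_poly_def by (intro arg_cong[where f=The] ext) (auto simp: assms)

lemma poly_interp_poly_diff:
  assumes "inj_on xh {0..n}"
  shows "poly (interp_poly n xh (\<lambda>k. v k + w k)) t - poly (interp_poly n xh v) t
         = poly (interp_poly n xh w) t"
  by (simp add: poly_interp_poly[OF assms] distrib_right sum.distrib)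

lemma bary_p_eq_interp_poly:
  assumes inj: "inj_on u {0..n}"
  shows "bary_p n t u y w = poly (interp_poly n u (\<lambda>k. w k * y k / bary_lambda n u k)) t"
  unfolding poly_interp_poly[OF inj] bary_p_def
proof (rule sum.cong)
  fix k assume "k \<in> {0..n}"
  then have "(\<Prod>j\<in>{0..n} - {k}. (u k - u j)) \<noteq> 0"
    using node_product_nonzero[OF inj] by simp
  then show "w k * y k * (\<Prod>j\<in>{0..n} - {k}. (t - u j))
           = w k * y k / bary_lambda n u k * lagrange_basis n u k t"
    by (simp add: bary_lambda_def lagrange_basis_def prod_dividef)
qed simp

lemma bary_lambda_ratio:
  assumes "inj_on xh {0..n}" "k \<le> n"
  shows "bary_lambda n x k * y k / bary_lambda n xh k = y k + y k * bary_z n x xh k"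
  using node_product_nonzero[OF assms]
  by (simp add: bary_z_def bary_lambda_def field_simps)

lemma sup_norm_ge:
  assumes "k \<le> n"
  shows "\<bar>v k\<bar> \<le> sup_norm n v"
  unfolding sup_norm_def using assms by (intro Max_ge) auto

lemma sup_norm_attained:
  obtains k where "k \<le> n" "sup_norm n v = \<bar>v k\<bar>"
proof -
  have "sup_norm n v \<in> (\<lambda>k. \<bar>v k\<bar>) ` {0..n}"
    unfolding sup_norm_def by (intro Max_in) auto
  then show ?thesis using that by auto
qed

lemma bdd_above_abs_poly:
  fixes p :: "real poly"
  assumes "compact S"
  shows "bdd_above ((\<lambda>t. \<bar>poly p t\<bar>) ` S)"
proof -
  have "continuous_on S (\<lambda>t. \<bar>poly p t\<bar>)" by (intro continuous_intros)
  then show ?thesis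
    by (intro bounded_imp_bdd_above compact_imp_bounded compact_continuous_image assms)
qed

lemma sup_norm_le_SUP_interp_poly:
  assumes inj: "inj_on xh {0..n}" and "compact S" and nodes: "\<And>k. k \<le> n \<Longrightarrow> xh k \<in> S"
  shows "sup_norm n v \<le> (SUP t\<in>S. \<bar>poly (interp_poly n xh v) t\<bar>)"
proof -
  obtain k where k: "k \<le> n" "sup_norm n v = \<bar>v k\<bar>" by (rule sup_norm_attained)
  have "\<bar>v k\<bar> = \<bar>poly (interp_poly n xh v) (xh k)\<bar>"
    using poly_lagrange_interp_node[OF inj k(1)] by (simp add: interp_poly_eq_lagrange_interp[OF inj])
  also have "\<dots> \<le> (SUP t\<in>S. \<bar>poly (interp_poly n xh v) t\<bar>)"
    by (intro cSUP_upper nodes k(1) bdd_above_abs_poly \<open>compact S\<close>)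
  finally show ?thesis using k(2) by simp
qed

lemma bdd_above_lebesgue_function:
  "bdd_above ((\<lambda>t. \<Sum>j\<in>{0..n}. \<bar>lagrange_basis n xh j t\<bar>) ` {a..b})"
  unfolding lagrange_basis_def prod_dividef divide_inverse
  by (intro bounded_imp_bdd_above compact_imp_bounded compact_continuous_image
      continuous_intros compact_Icc)

lemma SUP_interp_poly_le_lebesgue_const:
  assumes inj: "inj_on xh {0..n}" and "xh 0 \<le> xh n"
  shows "(SUP t\<in>{xh 0..xh n}. \<bar>poly (interp_poly n xh v) t\<bar>) \<le> lebesgue_const n xh * sup_norm n v"
proof (rule cSUP_least)
  show "{xh 0..xh n} \<noteq> {}" using \<open>xh 0 \<le> xh n\<close> by simp
next
  fix t assume t: "t \<in> {xh 0..xh n}"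
  have "\<bar>poly (interp_poly n xh v) t\<bar> \<le> (\<Sum>k\<in>{0..n}. \<bar>v k\<bar> * \<bar>lagrange_basis n xh k t\<bar>)"
    unfolding poly_interp_poly[OF inj] abs_mult[symmetric] by (rule sum_abs)
  also have "\<dots> \<le> (\<Sum>k\<in>{0..n}. sup_norm n v * \<bar>lagrange_basis n xh k t\<bar>)"
    by (intro sum_mono mult_right_mono sup_norm_ge) auto
  also have "\<dots> = sup_norm n v * (\<Sum>k\<in>{0..n}. \<bar>lagrange_basis n xh k t\<bar>)"
    by (simp add: sum_distrib_left)
  also have "\<dots> \<le> sup_norm n v * lebesgue_const n xh"
    unfolding lebesgue_const_def
    using t sup_norm_ge[of 0 n v]
    by (intro mult_left_mono cSUP_upper bdd_above_lebesgue_function) auto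
  finally show "\<bar>poly (interp_poly n xh v) t\<bar> \<le> lebesgue_const n xh * sup_norm n v"
    by (simp add: mult.commute)
qed

theorem theorem2:
  fixes n :: nat and x xh y :: "nat \<Rightarrow> real"
  assumes "\<And>i j. i < j \<Longrightarrow> j \<le> n \<Longrightarrow> x i < x j"
    and "\<And>i j. i < j \<Longrightarrow> j \<le> n \<Longrightarrow> xh i < xh j"
    and "xh 0 = x 0" and "xh n = x n"
  shows "sup_norm n (\<lambda>k. y k * bary_z n x xh k)
           \<le> (SUP t\<in>{x 0..x n}. \<bar>bary_p n t xh y (bary_lambda n x) - poly (interp_poly n xh y) t\<bar>)
       \<and> (SUP t\<in>{x 0..x n}. \<bar>bary_p n t xh y (bary_lambda n x) - poly (interp_poly n xh y) t\<bar>)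
           \<le> lebesgue_const n xh * sup_norm n (\<lambda>k. y k * bary_z n x xh k)
       \<and> (\<forall>t. bary_p n t xh y (bary_lambda n x)
              = poly (interp_poly n xh (\<lambda>k. y k + y k * bary_z n x xh k)) t)"
proof -
  have mono: "strict_mono_on {0..n} xh"
    using assms(2) by (auto simp: strict_mono_on_def)
  then have inj: "inj_on xh {0..n}" by (rule strict_mono_on_imp_inj_on)
  have nodes: "xh k \<in> {xh 0..xh n}" if "k \<le> n" for k
    using that mono by (auto simp: strict_mono_on_leD)
  define yz where "yz k = y k * bary_z n x xh k" for k
  have bary: "bary_p n t xh y (bary_lambda n x) = poly (interp_poly n xh (\<lambda>k. y k + yz k)) t" for t
    unfolding bary_p_eq_interp_poly[OF inj] yz_def
    by (simp add: bary_lambda_ratio[OF inj] cong: interp_poly_cong)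
  have error: "bary_p n t xh y (bary_lambda n x) - poly (interp_poly n xh y) t
               = poly (interp_poly n xh yz) t" for t
    unfolding bary poly_interp_poly_diff[OF inj] ..
  show ?thesis
    unfolding yz_def[symmetric] error unfolding bary assms(3,4)[symmetric]
    using sup_norm_le_SUP_interp_poly[OF inj compact_Icc nodes]
          SUP_interp_poly_le_lebesgue_const[OF inj] nodes[of 0]
    by auto
qed

end
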